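(* Let $G=(V,E,w)$ be an edge-weighted graph with positive rational weights and no isolated vertices. A set $S\subseteq V$ is a weighted partial positive influence total dominating set (WPPITDS) if and only if $g(S)=g_{\max}$, where $g(A)=h(A)+\frac1L f(A)$ and $g_{\max}=\max_{X\subseteq V}g(X)$.
   Context: $N_A(v)=N(v)\cap A$, $W_A(v)=\sum_{u\in N_A(v)}w_{(v,u)}$, $W(v)=W_V(v)$. $h(A)=\sum_{v\in V}h_A(v)$ with $h_A(v)=W(v)/2$ if $v\in A$ or $W_A(v)\ge W(v)/2$, and $h_A(v)=W_A(v)$ otherwise. $f(A)=\sum_{v\in V}\delta_A(v)$ with $\delta_A(v)=1$ if $|N_A(v)|>0$ and $0$ otherwise. $L=\max_v l(v)$ where $l(v)$ is the lcm of the denominators of the reduced fractions $W(v)/2$ and of the weights of edges incident to $v$. A WPPITDS is a set $S\subseteq V$ such that every $v\in V\setminus S$ satisfies $W_S(v)\ge W(v)/2$ and every vertex of $S$ has at least one neighbor in $S$. *)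

theory Defs
  imports Complex_Main
begin

definition weighted_graph :: "'a set \<Rightarrow> ('a \<times> 'a) set \<Rightarrow> ('a \<times> 'a \<Rightarrow> rat) \<Rightarrow> bool" where
  "weighted_graph V E w \<longleftrightarrow> finite V \<and> E \<subseteq> V \<times> V \<and> (\<forall>v. (v, v) \<notin> E)
     \<and> (\<forall>u v. (u, v) \<in> E \<longrightarrow> (v, u) \<in> E)
     \<and> (\<forall>u v. (u, v) \<in> E \<longrightarrow> w (u, v) = w (v, u) \<and> w (u, v) > 0)"

definition nbrs :: "('a \<times> 'a) set \<Rightarrow> 'a \<Rightarrow> 'a set" where
  "nbrs E v = {u. (v, u) \<in> E}"

definition no_isolated :: "'a set \<Rightarrow> ('a \<times> 'a) set \<Rightarrow> bool" where
  "no_isolated V E \<longleftrightarrow> (\<forall>v\<in>V. nbrs E v \<noteq> {})"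

definition nbrs_in :: "('a \<times> 'a) set \<Rightarrow> 'a set \<Rightarrow> 'a \<Rightarrow> 'a set" where
  "nbrs_in E A v = nbrs E v \<inter> A"

definition Wt :: "('a \<times> 'a) set \<Rightarrow> ('a \<times> 'a \<Rightarrow> rat) \<Rightarrow> 'a set \<Rightarrow> 'a \<Rightarrow> rat" where
  "Wt E w A v = (\<Sum>u\<in>nbrs_in E A v. w (v, u))"

definition Wtot :: "'a set \<Rightarrow> ('a \<times> 'a) set \<Rightarrow> ('a \<times> 'a \<Rightarrow> rat) \<Rightarrow> 'a \<Rightarrow> rat" where
  "Wtot V E w v = Wt E w V v"

definition hv :: "'a set \<Rightarrow> ('a \<times> 'a) set \<Rightarrow> ('a \<times> 'a \<Rightarrow> rat) \<Rightarrow> 'a set \<Rightarrow> 'a \<Rightarrow> rat" where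
  "hv V E w A v = (if v \<in> A \<or> Wt E w A v \<ge> Wtot V E w v / 2 then Wtot V E w v / 2 else Wt E w A v)"

definition hfun :: "'a set \<Rightarrow> ('a \<times> 'a) set \<Rightarrow> ('a \<times> 'a \<Rightarrow> rat) \<Rightarrow> 'a set \<Rightarrow> rat" where
  "hfun V E w A = (\<Sum>v\<in>V. hv V E w A v)"

definition ffun :: "'a set \<Rightarrow> ('a \<times> 'a) set \<Rightarrow> 'a set \<Rightarrow> nat" where
  "ffun V E A = (\<Sum>v\<in>V. if card (nbrs_in E A v) > 0 then 1 else 0)"

definition denom :: "rat \<Rightarrow> nat" where
  "denom q = nat (snd (quotient_of q))"

definition lv :: "'a set \<Rightarrow> ('a \<times> 'a) set \<Rightarrow> ('a \<times> 'a \<Rightarrow> rat) \<Rightarrow> 'a \<Rightarrow> nat" where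
  "lv V E w v = Lcm ({denom (Wtot V E w v / 2)} \<union> (\<lambda>u. denom (w (v, u))) ` nbrs E v)"

definition Lconst :: "'a set \<Rightarrow> ('a \<times> 'a) set \<Rightarrow> ('a \<times> 'a \<Rightarrow> rat) \<Rightarrow> nat" where
  "Lconst V E w = Max (lv V E w ` V)"

definition gfun :: "'a set \<Rightarrow> ('a \<times> 'a) set \<Rightarrow> ('a \<times> 'a \<Rightarrow> rat) \<Rightarrow> 'a set \<Rightarrow> rat" where
  "gfun V E w A = hfun V E w A + of_nat (ffun V E A) / of_nat (Lconst V E w)"

definition gmax :: "'a set \<Rightarrow> ('a \<times> 'a) set \<Rightarrow> ('a \<times> 'a \<Rightarrow> rat) \<Rightarrow> rat" where
  "gmax V E w = Max (gfun V E w ` Pow V)"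

definition is_WPPITDS :: "'a set \<Rightarrow> ('a \<times> 'a) set \<Rightarrow> ('a \<times> 'a \<Rightarrow> rat) \<Rightarrow> 'a set \<Rightarrow> bool" where
  "is_WPPITDS V E w S \<longleftrightarrow> S \<subseteq> V
     \<and> (\<forall>v\<in>V - S. Wt E w S v \<ge> Wtot V E w v / 2)
     \<and> (\<forall>v\<in>S. nbrs_in E S v \<noteq> {})"

end

theory Submission
  imports Defs
begin

text \<open>Each summand of h is at most W(v)/2, with equality iff v lies in A or is half-dominated
  by A, and f is at most |V|, with equality iff every vertex has a neighbour in A. Since there
  are no isolated vertices, A = V attains both bounds at once, so g_max is the sum of the two
  bounds and g(S) = g_max holds iff S attains both. This says exactly that S is a WPPITDS:
  a vertex outside S with W_S(v) \<ge> W(v)/2 > 0 automatically has a neighbour in S.\<close>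

lemma nbrs_subset: "weighted_graph V E w \<Longrightarrow> nbrs E v \<subseteq> V"
  unfolding weighted_graph_def nbrs_def by auto

lemma finite_vertices: "weighted_graph V E w \<Longrightarrow> finite V"
  unfolding weighted_graph_def by simp

lemma finite_nbrs: "weighted_graph V E w \<Longrightarrow> finite (nbrs E v)"
  by (rule finite_subset[OF nbrs_subset finite_vertices])

lemma finite_nbrs_in: "weighted_graph V E w \<Longrightarrow> finite (nbrs_in E A v)"
  unfolding nbrs_in_def by (simp add: finite_nbrs)

lemma nbrs_in_vertices: "weighted_graph V E w \<Longrightarrow> nbrs_in E V v = nbrs E v"
  using nbrs_subset unfolding nbrs_in_def by fastforce

lemma nbrs_in_vertices_nonempty:
  "weighted_graph V E w \<Longrightarrow> no_isolated V E \<Longrightarrow> v \<in> V \<Longrightarrow> nbrs_in E V v \<noteq> {}"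
  by (simp add: nbrs_in_vertices no_isolated_def)

lemma Wtot_pos:
  assumes "weighted_graph V E w" "no_isolated V E" "v \<in> V"
  shows "Wtot V E w v > 0"
proof -
  have "\<forall>u\<in>nbrs_in E V v. w (v, u) > 0"
    using assms(1) unfolding weighted_graph_def nbrs_in_def nbrs_def by auto
  then show ?thesis
    unfolding Wtot_def Wt_def
    using finite_nbrs_in[OF assms(1)] nbrs_in_vertices_nonempty[OF assms] by (simp add: sum_pos)
qed

lemma Wt_pos_imp_nbrs_in_nonempty: "Wt E w A v > 0 \<Longrightarrow> nbrs_in E A v \<noteq> {}"
  unfolding Wt_def by auto

lemma hv_le_half: "hv V E w A v \<le> Wtot V E w v / 2"
  unfolding hv_def by auto

lemma hv_eq_half_iff:
  "hv V E w A v = Wtot V E w v / 2 \<longleftrightarrow> v \<in> A \<or> Wt E w A v \<ge> Wtot V E w v / 2"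
  unfolding hv_def by auto

lemma hfun_le: "hfun V E w A \<le> (\<Sum>v\<in>V. Wtot V E w v / 2)"
  unfolding hfun_def by (intro sum_mono hv_le_half)

lemma hfun_eq_iff:
  assumes "finite V"
  shows "hfun V E w A = (\<Sum>v\<in>V. Wtot V E w v / 2)
    \<longleftrightarrow> (\<forall>v\<in>V. v \<in> A \<or> Wt E w A v \<ge> Wtot V E w v / 2)"
proof -
  have "hfun V E w A = (\<Sum>v\<in>V. Wtot V E w v / 2)
      \<longleftrightarrow> (\<Sum>v\<in>V. Wtot V E w v / 2 - hv V E w A v) = 0"
    unfolding hfun_def by (auto simp: sum_subtractf)
  also have "\<dots> \<longleftrightarrow> (\<forall>v\<in>V. hv V E w A v = Wtot V E w v / 2)"
    using assms hv_le_half[of V E w A] by (subst sum_nonneg_eq_0_iff) auto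
  also have "\<dots> \<longleftrightarrow> (\<forall>v\<in>V. v \<in> A \<or> Wt E w A v \<ge> Wtot V E w v / 2)"
    by (simp only: hv_eq_half_iff)
  finally show ?thesis .
qed

lemma ffun_eq_card_dominated:
  assumes "weighted_graph V E w"
  shows "ffun V E A = card {v\<in>V. nbrs_in E A v \<noteq> {}}"
proof -
  have "finite V"
    using assms by (rule finite_vertices)
  then show ?thesis
    unfolding ffun_def using finite_nbrs_in[OF assms]
    by (simp add: sum.inter_filter[symmetric] card_gt_0_iff)
qed

lemma ffun_le_card: "weighted_graph V E w \<Longrightarrow> ffun V E A \<le> card V"
  by (simp add: ffun_eq_card_dominated card_mono finite_vertices)

lemma ffun_eq_card_iff:
  assumes "weighted_graph V E w"
  shows "ffun V E A = card V \<longleftrightarrow> (\<forall>v\<in>V. nbrs_in E A v \<noteq> {})"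
proof -
  have "finite V"
    using assms by (rule finite_vertices)
  then have "card {v\<in>V. nbrs_in E A v \<noteq> {}} = card V \<longleftrightarrow> {v\<in>V. nbrs_in E A v \<noteq> {}} = V"
    by (metis (no_types, lifting) card_subset_eq mem_Collect_eq subsetI)
  then show ?thesis
    by (auto simp: ffun_eq_card_dominated[OF assms])
qed

lemma Lconst_pos:
  assumes "weighted_graph V E w" "v \<in> V"
  shows "Lconst V E w > 0"
proof -
  have "finite V" "finite (nbrs E v)"
    using finite_vertices[OF assms(1)] finite_nbrs[OF assms(1)] .
  moreover have denom_nonzero: "denom q \<noteq> 0" for q
    unfolding denom_def using quotient_of_denom_pos'[of q] by simp
  ultimately have "lv V E w v \<noteq> 0"
    unfolding lv_def by (subst Lcm_0_iff_nat) (auto simp: denom_nonzero)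
  moreover have "lv V E w v \<le> Lconst V E w"
    unfolding Lconst_def using \<open>finite V\<close> assms(2) by simp
  ultimately show ?thesis
    by simp
qed

lemma gfun_le:
  assumes "weighted_graph V E w"
  shows "gfun V E w A \<le> (\<Sum>v\<in>V. Wtot V E w v / 2) + of_nat (card V) / of_nat (Lconst V E w)"
  unfolding gfun_def using hfun_le ffun_le_card[OF assms]
  by (intro add_mono divide_right_mono) auto

lemma gfun_vertices:
  assumes "weighted_graph V E w" "no_isolated V E"
  shows "gfun V E w V = (\<Sum>v\<in>V. Wtot V E w v / 2) + of_nat (card V) / of_nat (Lconst V E w)"
proof -
  have "hfun V E w V = (\<Sum>v\<in>V. Wtot V E w v / 2)"
    unfolding hfun_def hv_def by simp
  moreover have "ffun V E V = card V"
    by (subst ffun_eq_card_iff[OF assms(1)]) (simp add: nbrs_in_vertices_nonempty[OF assms])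
  ultimately show ?thesis
    unfolding gfun_def by (simp only:)
qed

lemma gmax_eq:
  assumes "weighted_graph V E w" "no_isolated V E"
  shows "gmax V E w = (\<Sum>v\<in>V. Wtot V E w v / 2) + of_nat (card V) / of_nat (Lconst V E w)"
  unfolding gmax_def
proof (rule Max_eqI)
  show "finite (gfun V E w ` Pow V)"
    using finite_vertices[OF assms(1)] by simp
  show "y \<le> (\<Sum>v\<in>V. Wtot V E w v / 2) + of_nat (card V) / of_nat (Lconst V E w)"
    if "y \<in> gfun V E w ` Pow V" for y
    using that gfun_le[OF assms(1)] by blast
  have "V \<in> Pow V"
    by simp
  then show "(\<Sum>v\<in>V. Wtot V E w v / 2) + of_nat (card V) / of_nat (Lconst V E w) \<in> gfun V E w ` Pow V"
    unfolding gfun_vertices[OF assms, symmetric] by (rule imageI)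
qed

lemma gfun_eq_gmax_iff:
  assumes "weighted_graph V E w" "no_isolated V E"
  shows "gfun V E w A = gmax V E w
    \<longleftrightarrow> hfun V E w A = (\<Sum>v\<in>V. Wtot V E w v / 2) \<and> ffun V E A = card V"
proof (cases "V = {}")
  case True
  then show ?thesis
    using gmax_eq[OF assms] by (simp add: gfun_def hfun_def ffun_def)
next
  case False
  then have L_pos: "(of_nat (Lconst V E w) :: rat) > 0"
    using Lconst_pos[OF assms(1)] by auto
  have "of_nat (ffun V E A) / of_nat (Lconst V E w) \<le> (of_nat (card V) :: rat) / of_nat (Lconst V E w)"
    using ffun_le_card[OF assms(1)] by (simp add: divide_right_mono)
  then have "gfun V E w A = gmax V E w \<longleftrightarrow> hfun V E w A = (\<Sum>v\<in>V. Wtot V E w v / 2)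
      \<and> of_nat (ffun V E A) / of_nat (Lconst V E w) = (of_nat (card V) :: rat) / of_nat (Lconst V E w)"
    unfolding gmax_eq[OF assms] gfun_def using hfun_le[of V E w A] by linarith
  then show ?thesis
    using L_pos by simp
qed

lemma is_WPPITDS_iff:
  assumes "weighted_graph V E w" "no_isolated V E" "S \<subseteq> V"
  shows "is_WPPITDS V E w S \<longleftrightarrow> (\<forall>v\<in>V. v \<in> S \<or> Wt E w S v \<ge> Wtot V E w v / 2)
    \<and> (\<forall>v\<in>V. nbrs_in E S v \<noteq> {})"
proof -
  have "nbrs_in E S v \<noteq> {}" if "v \<in> V - S" "Wt E w S v \<ge> Wtot V E w v / 2" for v
    using that Wtot_pos[OF assms(1,2)] Wt_pos_imp_nbrs_in_nonempty
    by (metis DiffD1 half_gt_zero order_less_le_trans)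
  then show ?thesis
    unfolding is_WPPITDS_def using assms(3) by blast
qed

theorem mainTheorem16:
  fixes V :: "'a set" and E :: "('a \<times> 'a) set" and w :: "'a \<times> 'a \<Rightarrow> rat" and S :: "'a set"
  assumes "weighted_graph V E w"
    and "no_isolated V E"
    and "S \<subseteq> V"
  shows "is_WPPITDS V E w S \<longleftrightarrow> gfun V E w S = gmax V E w"
proof -
  have "gfun V E w S = gmax V E w
      \<longleftrightarrow> hfun V E w S = (\<Sum>v\<in>V. Wtot V E w v / 2) \<and> ffun V E S = card V"
    using gfun_eq_gmax_iff[OF assms(1,2)] .
  also have "\<dots> \<longleftrightarrow> (\<forall>v\<in>V. v \<in> S \<or> Wt E w S v \<ge> Wtot V E w v / 2)
      \<and> (\<forall>v\<in>V. nbrs_in E S v \<noteq> {})"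
    using hfun_eq_iff[OF finite_vertices[OF assms(1)]] ffun_eq_card_iff[OF assms(1)] by simp
  also have "\<dots> \<longleftrightarrow> is_WPPITDS V E w S"
    using is_WPPITDS_iff[OF assms] by simp
  finally show ?thesis
    by simp
qed

end
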